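(* Let $\mathrm{k}$ be an infinite field and $\mathcal{A}$ a unital associative $\mathrm{k}$-algebra satisfying $\mathbf{H}_{\mathrm{s}}$. Let $V,W$ be finite-dimensional $\mathrm{k}$-subspaces of $\mathcal{A}$ such that the elements of $V$ pairwise commute, $V\cap U(\mathcal{A})\neq\emptyset$ and $W\cap U(\mathcal{A})\neq\emptyset$. Then there exist a $\mathrm{k}$-subspace $S$ of $\mathrm{k}\langle VW\rangle$ and a finite-dimensional subalgebra $\mathcal{H}$ of $\mathcal{A}$ such that $S\cap U(\mathcal{A})\neq\emptyset$, $\mathrm{k}\subseteq\mathcal{H}\subseteq\mathcal{A}$, $\dim_{\mathrm{k}}\mathrm{k}\langle VW\rangle\geq\dim_{\mathrm{k}}S\geq\dim_{\mathrm{k}}V+\dim_{\mathrm{k}}W-\dim_{\mathrm{k}}\mathcal{H}$, and $\mathcal{H}S=S$.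
   Context: Algebras are unital associative, subalgebras contain $1$; $U(\mathcal{A})$ is the group of invertible elements; $\mathrm{k}\langle S\rangle$ is linear span; $VW=\{vw\mid v\in V,w\in W\}$. Hypothesis $\mathbf{H}_{\mathrm{s}}$: $\mathcal{A}$ is finite-dimensional over $\mathrm{k}$, or $\mathrm{k}\in\{\mathbb{R},\mathbb{C}\}$ and $\mathcal{A}$ is a Banach algebra over $\mathrm{k}$, or $\mathcal{A}$ is a finite product of field extensions of $\mathrm{k}$. No hypothesis on the number of subalgebras is made. *)

theory Defs
  imports "HOL-Analysis.Analysis"
begin

definition is_k_algebra :: "('k::field \<Rightarrow> 'a::ring_1 \<Rightarrow> 'a) \<Rightarrow> bool" where
  "is_k_algebra smult_k \<longleftrightarrow> vector_space smult_k \<and>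
     (\<forall>c x y. smult_k c (x * y) = smult_k c x * y \<and> smult_k c (x * y) = x * smult_k c y)"

definition units_of_ring :: "'a::ring_1 set" where
  "units_of_ring = {x. \<exists>y. x * y = 1 \<and> y * x = 1}"

definition set_prod :: "'a::times set \<Rightarrow> 'a set \<Rightarrow> 'a set" where
  "set_prod V W = {v * w | v w. v \<in> V \<and> w \<in> W}"

definition fin_dim_subspace :: "('k::field \<Rightarrow> 'a::ring_1 \<Rightarrow> 'a) \<Rightarrow> 'a set \<Rightarrow> bool" where
  "fin_dim_subspace smult_k V \<longleftrightarrow> module.subspace smult_k V \<and>
     (\<exists>B. finite B \<and> B \<subseteq> V \<and> module.span smult_k B = V)"

definition is_subalgebra :: "('k::field \<Rightarrow> 'a::ring_1 \<Rightarrow> 'a) \<Rightarrow> 'a set \<Rightarrow> bool" where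
  "is_subalgebra smult_k H \<longleftrightarrow> module.subspace smult_k H \<and> 1 \<in> H \<and>
     (\<forall>x\<in>H. \<forall>y\<in>H. x * y \<in> H)"

definition field_iso :: "('k::field \<Rightarrow> 'f::field) \<Rightarrow> bool" where
  "field_iso \<phi> \<longleftrightarrow> bij \<phi> \<and> \<phi> 1 = 1 \<and>
     (\<forall>a b. \<phi> (a + b) = \<phi> a + \<phi> b \<and> \<phi> (a * b) = \<phi> a * \<phi> b)"

definition banach_algebra_norm ::
    "('k::field \<Rightarrow> 'a::ring_1 \<Rightarrow> 'a) \<Rightarrow> ('k \<Rightarrow> real) \<Rightarrow> ('a \<Rightarrow> real) \<Rightarrow> bool" where
  "banach_algebra_norm smult_k a N \<longleftrightarrow>
     (\<forall>x. 0 \<le> N x) \<and> (\<forall>x. N x = 0 \<longleftrightarrow> x = 0) \<and>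
     (\<forall>x y. N (x + y) \<le> N x + N y) \<and>
     (\<forall>c x. N (smult_k c x) = a c * N x) \<and>
     (\<forall>x y. N (x * y) \<le> N x * N y) \<and>
     (\<forall>X :: nat \<Rightarrow> 'a.
        (\<forall>e>0. \<exists>M. \<forall>m\<ge>M. \<forall>n\<ge>M. N (X m - X n) < e) \<longrightarrow>
        (\<exists>L. (\<lambda>n. N (X n - L)) \<longlonglongrightarrow> 0))"

definition banach_over_R_or_C :: "('k::field \<Rightarrow> 'a::ring_1 \<Rightarrow> 'a) \<Rightarrow> bool" where
  "banach_over_R_or_C smult_k \<longleftrightarrow>
     (\<exists>(\<phi> :: 'k \<Rightarrow> real) N. field_iso \<phi> \<and> banach_algebra_norm smult_k (\<lambda>c. \<bar>\<phi> c\<bar>) N) \<or>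
     (\<exists>(\<phi> :: 'k \<Rightarrow> complex) N. field_iso \<phi> \<and> banach_algebra_norm smult_k (\<lambda>c. cmod (\<phi> c)) N)"

text \<open>A is a finite product of field extensions of k, expressed as an internal
  direct product: A commutative, with orthogonal idempotents e_0..e_(n-1) summing
  to 1 such that each e_i A is a field (with identity e_i).\<close>
definition finite_product_of_fields :: "'a::ring_1 itself \<Rightarrow> bool" where
  "finite_product_of_fields _ \<longleftrightarrow>
     (\<forall>x y :: 'a. x * y = y * x) \<and>
     (\<exists>(n::nat) (e :: nat \<Rightarrow> 'a).
        (\<forall>i<n. e i * e i = e i \<and> e i \<noteq> 0) \<and>
        (\<forall>i<n. \<forall>j<n. i \<noteq> j \<longrightarrow> e i * e j = 0) \<and>
        (\<Sum>i<n. e i) = 1 \<and>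
        (\<forall>i<n. \<forall>x. x = e i * x \<and> x \<noteq> 0 \<longrightarrow> (\<exists>y. x * y = e i)))"

definition hyp_Hs :: "('k::field \<Rightarrow> 'a::ring_1 \<Rightarrow> 'a) \<Rightarrow> bool" where
  "hyp_Hs smult_k \<longleftrightarrow> fin_dim_subspace smult_k (UNIV :: 'a set) \<or>
     banach_over_R_or_C smult_k \<or> finite_product_of_fields TYPE('a)"

end

theory Submission
  imports Defs
begin

text \<open>
  Multiplying \<open>V\<close> on the left by the inverse of a unit \<open>v \<in> V\<close> and \<open>W\<close> on the right by the
  inverse of a unit \<open>w \<in> W\<close> preserves dimensions and commutativity, and the conclusion can
  be transported back along \<open>s \<mapsto> v s w\<close> and the conjugation \<open>h \<mapsto> v h v\<inverse>\<close>; so we may assume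
  \<open>1 \<in> V \<inter> W\<close>. Then we induct on \<open>dim V\<close> with Dyson's e-transform. If \<open>V W \<subseteq> W\<close>, take
  \<open>S = W\<close> and \<open>H\<close> its left stabilizer, which contains \<open>V\<close> and lies in \<open>W\<close>. Otherwise pick
  \<open>e \<in> W\<close> with \<open>V e \<not>\<subseteq> W\<close> and pass to \<open>V' = {v \<in> V. v e \<in> W}\<close> and
  \<open>W' = span (W \<union> V e)\<close>: \<open>V'\<close> is strictly smaller, \<open>dim V' + dim W' \<ge> dim V + dim W\<close>
  (a complement of \<open>W\<close> in \<open>W'\<close> lifts to a complement of \<open>V'\<close> in \<open>V\<close>), and, \<open>V\<close> being
  commutative, \<open>V' W' \<subseteq> span (V W)\<close>.
\<close>

definition left_stabilizer :: "'a::monoid_mult set \<Rightarrow> 'a set" where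
  "left_stabilizer W = {h. \<forall>w\<in>W. h * w \<in> W}"

lemma left_stabilizer_subset: "1 \<in> W \<Longrightarrow> left_stabilizer W \<subseteq> W"
  unfolding left_stabilizer_def by force

lemma set_prod_left_stabilizer: "set_prod (left_stabilizer W) W = W"
proof
  show "set_prod (left_stabilizer W) W \<subseteq> W"
    by (auto simp: set_prod_def left_stabilizer_def)
  show "W \<subseteq> set_prod (left_stabilizer W) W"
  proof
    fix w assume "w \<in> W"
    then show "w \<in> set_prod (left_stabilizer W) W"
      unfolding set_prod_def left_stabilizer_def
      by (intro CollectI exI[of _ 1] exI[of _ w]) simp
  qed
qed

lemma units_of_ring_mult:
  assumes "x \<in> units_of_ring" "y \<in> units_of_ring"
  shows "x * y \<in> units_of_ring"
proof -
  obtain x' y' where "x * x' = 1" "x' * x = 1" "y * y' = 1" "y' * y = 1"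
    using assms unfolding units_of_ring_def by blast
  then have "(x * y) * (y' * x') = 1" "(y' * x') * (x * y) = 1"
    by (simp_all add: mult.assoc[symmetric]) (simp_all add: mult.assoc)
  then show ?thesis
    unfolding units_of_ring_def by blast
qed

lemma set_prod_image_mult:
  fixes a b b' c :: "'a::monoid_mult"
  assumes "b * b' = 1"
  shows "set_prod ((\<lambda>s. a * s * b) ` X) ((\<lambda>s. b' * s * c) ` Y) = (\<lambda>s. a * s * c) ` set_prod X Y"
proof -
  have "b * (b' * z) = z" for z
    using assms by (simp add: mult.assoc[symmetric])
  then have prod: "a * x * b * (b' * y * c) = a * (x * y) * c" for x y
    by (simp add: mult.assoc)
  show ?thesis
  proof (intro equalityI subsetI)
    fix z assume "z \<in> set_prod ((\<lambda>s. a * s * b) ` X) ((\<lambda>s. b' * s * c) ` Y)"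
    then obtain x y where "x \<in> X" "y \<in> Y" "z = a * (x * y) * c"
      unfolding set_prod_def by (auto simp: prod)
    then show "z \<in> (\<lambda>s. a * s * c) ` set_prod X Y"
      unfolding set_prod_def by blast
  next
    fix z assume "z \<in> (\<lambda>s. a * s * c) ` set_prod X Y"
    then obtain x y where "x \<in> X" "y \<in> Y" "z = a * x * b * (b' * y * c)"
      unfolding set_prod_def by (auto simp: prod)
    then show "z \<in> set_prod ((\<lambda>s. a * s * b) ` X) ((\<lambda>s. b' * s * c) ` Y)"
      unfolding set_prod_def by blast
  qed
qed

lemma inj_mult:
  fixes u u' w w' :: "'a::monoid_mult"
  assumes "u' * u = 1" "w * w' = 1"
  shows "inj (\<lambda>s. u * s * w)"
proof (rule injI)
  fix x y assume "u * x * w = u * y * w"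
  then have "u' * (u * x * w) * w' = u' * (u * y * w) * w'"
    by simp
  moreover have "u' * (u * z * w) * w' = z" for z
    using assms by (simp add: mult.assoc[symmetric]) (simp add: mult.assoc)
  ultimately show "x = y"
    by simp
qed

lemma image_mult_cancel:
  fixes u u' w w' :: "'a::monoid_mult"
  assumes "u * u' = 1" "w' * w = 1"
  shows "(\<lambda>s. u * s * w) ` (\<lambda>s. u' * s * w') ` X = X"
proof -
  have "u * (u' * x * w') * w = x" for x
    using assms by (simp add: mult.assoc[symmetric]) (simp add: mult.assoc)
  then show ?thesis
    by (simp add: image_image)
qed

lemma commute_image_mult_inverse:
  fixes v a :: "'a::monoid_mult"
  assumes "v \<in> V" "v * a = 1" "a * v = 1" "\<forall>x\<in>V. \<forall>y\<in>V. x * y = y * x"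
  shows "\<forall>x\<in>(\<lambda>s. a * s) ` V. \<forall>y\<in>(\<lambda>s. a * s) ` V. x * y = y * x"
proof -
  have commute_a: "a * x = x * a" if "x \<in> V" for x
  proof -
    have "a * x = a * (x * v) * a"
      using assms(2) by (simp add: mult.assoc)
    also have "\<dots> = a * (v * x) * a"
      using assms(1,4) that by simp
    also have "\<dots> = x * a"
      using assms(3) by (simp add: mult.assoc[symmetric])
    finally show ?thesis .
  qed
  have "a * x * (a * y) = a * a * (x * y)" if "x \<in> V" "y \<in> V" for x y
    using commute_a[OF that(1)] by (simp add: mult.assoc) (simp add: mult.assoc[symmetric])
  then show ?thesis
    using assms(4) by auto
qed

locale k_algebra = vector_space scale
  for scale :: "'k::field \<Rightarrow> 'a::ring_1 \<Rightarrow> 'a"  (infixr \<open>*\<^sub>k\<close> 75) +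
  assumes scale_mult_left: "c *\<^sub>k (x * y) = (c *\<^sub>k x) * y"
    and scale_mult_right: "c *\<^sub>k (x * y) = x * (c *\<^sub>k y)"
begin

abbreviation fin_dim :: "'a set \<Rightarrow> bool" where
  "fin_dim \<equiv> fin_dim_subspace scale"

lemma fin_dim_obtain_basis:
  assumes "fin_dim T"
  obtains B where "finite B" "B \<subseteq> T" "independent B" "span B = T" "card B = dim T"
proof -
  obtain F where F: "finite F" "span F = T" and "subspace T"
    using assms unfolding fin_dim_subspace_def by blast
  obtain B where B: "B \<subseteq> T" "independent B" "T \<subseteq> span B" "card B = dim T"
    by (rule basis_exists)
  have "B \<subseteq> span F"
    using B(1) F(2) by simp
  then have "finite B"
    using independent_span_bound[OF F(1) B(2)] by simp
  moreover have "span B = T"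
    using span_subspace[OF B(1,3) \<open>subspace T\<close>] .
  ultimately show ?thesis
    using that B by blast
qed

lemma card_le_dim_if_independent:
  assumes "fin_dim T" "I \<subseteq> T" "independent I"
  shows "finite I" "card I \<le> dim T"
proof -
  obtain B where B: "finite B" "B \<subseteq> T" "independent B" "span B = T" "card B = dim T"
    by (rule fin_dim_obtain_basis[OF assms(1)])
  have "I \<subseteq> span B"
    using assms(2) B(4) by simp
  with independent_span_bound[OF B(1) assms(3)] B(5)
  show "finite I" "card I \<le> dim T"
    by simp_all
qed

lemma fin_dim_subset:
  assumes "fin_dim T" "subspace S" "S \<subseteq> T"
  shows "fin_dim S"
proof -
  obtain B where B: "B \<subseteq> S" "independent B" "S \<subseteq> span B"
    by (rule basis_exists)
  have "finite B"
    using card_le_dim_if_independent(1)[OF assms(1) order_trans[OF B(1) assms(3)] B(2)] .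
  moreover have "span B = S"
    by (rule span_subspace[OF B(1,3) assms(2)])
  ultimately show ?thesis
    unfolding fin_dim_subspace_def using assms(2) B(1) by blast
qed

lemma dim_le_if_subset_fin_dim:
  assumes "fin_dim T" "S \<subseteq> T"
  shows "dim S \<le> dim T"
proof -
  obtain B where B: "B \<subseteq> S" "independent B" "S \<subseteq> span B" "card B = dim S"
    by (rule basis_exists)
  show ?thesis
    using card_le_dim_if_independent(2)[OF assms(1) order_trans[OF B(1) assms(2)] B(2)] B(4)
    by simp
qed

lemma dim_less_if_psubset_fin_dim:
  assumes "fin_dim T" "subspace S" "S \<subset> T"
  shows "dim S < dim T"
proof -
  obtain B where B: "finite B" "B \<subseteq> S" "independent B" "span B = S" "card B = dim S"
    by (rule fin_dim_obtain_basis[OF fin_dim_subset[OF assms(1,2) psubset_imp_subset[OF assms(3)]]])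
  obtain v where v: "v \<in> T" "v \<notin> S"
    using assms(3) by blast
  have "independent (insert v B)"
    using B v independent_insertI by blast
  then have "card (insert v B) \<le> dim T"
    using card_le_dim_if_independent(2)[OF assms(1)] B(2) v(1) assms(3) by blast
  moreover have "v \<notin> B"
    using B(2) v(2) by blast
  ultimately show ?thesis
    using B(1,5) by simp
qed

lemma fin_dim_span: "finite F \<Longrightarrow> fin_dim (span F)"
  unfolding fin_dim_subspace_def using span_superset by blast

lemma fin_dim_span_Un:
  assumes "fin_dim A" "fin_dim B"
  shows "fin_dim (span (A \<union> B))"
proof -
  obtain FA FB where F: "finite FA" "span FA = A" "finite FB" "span FB = B"
    using assms unfolding fin_dim_subspace_def by blast
  have "span (A \<union> B) = span (span FA \<union> span FB)"
    using F by simp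
  also have "\<dots> = span (FA \<union> FB)"
    by (simp add: span_Un span_span)
  finally show ?thesis
    using fin_dim_span F(1,3) by simp
qed

lemma fin_dim_linear_image:
  assumes "Vector_Spaces.linear scale scale f" "fin_dim S"
  shows "fin_dim (f ` S)"
proof -
  interpret f: Vector_Spaces.linear scale scale f by fact
  obtain F where "finite F" "span F = S"
    using assms(2) unfolding fin_dim_subspace_def by blast
  moreover have "f ` span F = span (f ` F)"
    by (simp add: f.span_image)
  ultimately show ?thesis
    using fin_dim_span[of "f ` F"] by simp
qed

lemma dim_linear_image_inj:
  assumes "Vector_Spaces.linear scale scale f" "inj f"
  shows "dim (f ` S) = dim S"
proof -
  interpret f: Vector_Spaces.linear scale scale f by fact
  obtain B where B: "B \<subseteq> S" "independent B" "S \<subseteq> span B" "card B = dim S"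
    by (rule basis_exists)
  have "independent (f ` B)"
    using f.independent_injective_image[OF B(2)] inj_on_subset[OF assms(2)] by simp
  moreover have "f ` S \<subseteq> span (f ` B)"
    using image_mono[OF B(3)] by (simp add: f.span_image)
  moreover have "card (f ` B) = dim S"
    using card_image[OF inj_on_subset[OF assms(2)]] B(4) by simp
  ultimately show ?thesis
    using image_mono[OF B(1)] by (intro dim_unique)
qed

lemma fin_dim_Int_vimage:
  assumes "Vector_Spaces.linear scale scale f" "fin_dim V" "subspace W"
  shows "fin_dim (V \<inter> f -` W)"
proof -
  interpret f: Vector_Spaces.linear scale scale f by fact
  have "subspace V"
    using assms(2) unfolding fin_dim_subspace_def by blast
  then show ?thesis
    by (intro fin_dim_subset[OF assms(2)] subspace_inter f.subspace_vimage assms(3)) auto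
qed

lemma obtain_complement_in_span:
  assumes "fin_dim W" "fin_dim (span (W \<union> X))"
  obtains E where "E \<subseteq> X" "finite E" "dim W + card E \<le> dim (span (W \<union> X))"
    "X \<subseteq> span (W \<union> E)"
proof -
  obtain BW where BW: "finite BW" "BW \<subseteq> W" "independent BW" "span BW = W" "card BW = dim W"
    by (rule fin_dim_obtain_basis[OF assms(1)])
  obtain B where B: "BW \<subseteq> B" "B \<subseteq> W \<union> X" "independent B" "W \<union> X \<subseteq> span B"
    by (rule maximal_independent_subset_extend[of BW "W \<union> X"]) (use BW(2,3) in blast)+
  have B_span: "B \<subseteq> span (W \<union> X)"
    using B(2) span_superset by blast
  note B_card = card_le_dim_if_independent[OF assms(2) B_span B(3)]
  define E where "E = B - W"
  have "E \<subseteq> X" "finite E"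
    using B(2) B_card(1) by (auto simp: E_def)
  moreover have "dim W + card E \<le> dim (span (W \<union> X))"
  proof -
    have "dim W + card E = card (BW \<union> E)"
      using BW(1,2,5) \<open>finite E\<close> by (subst card_Un_disjoint) (auto simp: E_def)
    also have "\<dots> \<le> card B"
      using B(1) B_card(1) by (intro card_mono) (auto simp: E_def)
    finally show ?thesis
      using B_card(2) by simp
  qed
  moreover have "X \<subseteq> span (W \<union> E)"
  proof -
    have "B \<subseteq> W \<union> E"
      by (auto simp: E_def)
    then show ?thesis
      using B(4) span_mono by blast
  qed
  ultimately show ?thesis
    using that by blast
qed

lemma subset_span_Int_vimage_Un:
  assumes "Vector_Spaces.linear scale scale f" "subspace V" "subspace W"
    and "E \<subseteq> V" "f ` V \<subseteq> span (W \<union> f ` E)"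
  shows "V \<subseteq> span ((V \<inter> f -` W) \<union> E)"
proof
  interpret f: Vector_Spaces.linear scale scale f by fact
  fix v assume v: "v \<in> V"
  then have "f v \<in> span (W \<union> f ` E)"
    using assms(5) by blast
  then obtain w y where wy: "f v = w + y" "w \<in> span W" "y \<in> span (f ` E)"
    unfolding span_Un by blast
  then obtain x where x: "x \<in> span E" "y = f x"
    by (auto simp: f.span_image)
  have "x \<in> V"
    using x(1) span_minimal[OF assms(4,2)] by blast
  moreover have "f (v - x) \<in> W"
    using wy x assms(3) by (simp add: f.diff span_eq_iff[THEN iffD2, OF assms(3)])
  ultimately have "v - x \<in> V \<inter> f -` W"
    using v assms(2) subspace_diff by blast
  then have "(v - x) + x \<in> span ((V \<inter> f -` W) \<union> E)"
    using x(1) span_mono[of E] by (intro span_add) (auto intro: span_base)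
  then show "v \<in> span ((V \<inter> f -` W) \<union> E)"
    by simp
qed

lemma dim_add_le_dim_Int_vimage_add_dim_span:
  assumes "Vector_Spaces.linear scale scale f" "fin_dim V" "fin_dim W"
  shows "dim V + dim W \<le> dim (V \<inter> f -` W) + dim (span (W \<union> f ` V))"
proof -
  have V: "subspace V" and W: "subspace W"
    using assms(2,3) unfolding fin_dim_subspace_def by blast+
  have "fin_dim (span (W \<union> f ` V))"
    by (intro fin_dim_span_Un fin_dim_linear_image assms)
  then obtain E where E: "E \<subseteq> f ` V" "finite E" "dim W + card E \<le> dim (span (W \<union> f ` V))"
      "f ` V \<subseteq> span (W \<union> E)"
    by (rule obtain_complement_in_span[OF assms(3)])
  define E0 where "E0 = inv_into V f ` E"
  have E0: "E0 \<subseteq> V" "finite E0" "card E0 \<le> card E" "f ` E0 = E"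
    using E(1) by (auto simp: E0_def inv_into_into image_inv_into_cancel card_image_le E(2))
  obtain B where B: "finite B" "B \<subseteq> V \<inter> f -` W" "independent B"
      "span B = V \<inter> f -` W" "card B = dim (V \<inter> f -` W)"
    by (rule fin_dim_obtain_basis[OF fin_dim_Int_vimage[OF assms(1,2) W]])
  have "V \<subseteq> span ((V \<inter> f -` W) \<union> E0)"
    using E(4) E0 by (intro subset_span_Int_vimage_Un assms(1) V W) auto
  also have "\<dots> = span (span B \<union> E0)"
    using B(4) by simp
  also have "\<dots> = span (B \<union> E0)"
    by (simp add: span_Un span_span)
  finally have "dim V \<le> card (B \<union> E0)"
    using B(1) E0(2) by (intro dim_le_card) auto
  also have "\<dots> \<le> card B + card E0"
    by (rule card_Un_le)
  finally show ?thesis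
    using B(5) E0(3) E(3) by linarith
qed

lemma linear_mult: "Vector_Spaces.linear scale scale (\<lambda>s. a * s * b)"
  unfolding Vector_Spaces.linear_iff
  by (auto simp: vector_space_axioms distrib_left distrib_right
      scale_mult_left[symmetric] scale_mult_right[symmetric])

lemma linear_mult_left: "Vector_Spaces.linear scale scale (\<lambda>s. a * s)"
  using linear_mult[of a 1] by simp

lemma linear_mult_right: "Vector_Spaces.linear scale scale (\<lambda>s. s * b)"
  using linear_mult[of 1 b] by simp

lemma dim_image_mult:
  assumes "u' * u = 1" "w * w' = 1"
  shows "dim ((\<lambda>s. u * s * w) ` X) = dim X"
  by (rule dim_linear_image_inj[OF linear_mult inj_mult[OF assms]])

lemma mult_mem_span_set_prod:
  assumes "x \<in> span X" "y \<in> span Y"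
  shows "x * y \<in> span (set_prod X Y)"
proof -
  interpret R: Vector_Spaces.linear scale scale "\<lambda>s. s * y"
    by (rule linear_mult_right)
  have "g * y \<in> span (set_prod X Y)" if "g \<in> X" for g
  proof -
    interpret L: Vector_Spaces.linear scale scale "\<lambda>s. g * s"
      by (rule linear_mult_left)
    have "g * y \<in> span ((\<lambda>s. g * s) ` Y)"
      using assms(2) by (simp add: L.span_image)
    also have "\<dots> \<subseteq> span (set_prod X Y)"
      using that by (intro span_mono) (auto simp: set_prod_def)
    finally show ?thesis .
  qed
  then have "span ((\<lambda>s. s * y) ` X) \<subseteq> span (set_prod X Y)"
    by (intro span_minimal subspace_span) auto
  moreover have "x * y \<in> span ((\<lambda>s. s * y) ` X)"
    using assms(1) by (simp add: R.span_image)
  ultimately show ?thesis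
    by blast
qed

lemma fin_dim_span_set_prod:
  assumes "fin_dim V" "fin_dim W"
  shows "fin_dim (span (set_prod V W))"
proof -
  obtain FV FW where F: "finite FV" "span FV = V" "finite FW" "span FW = W"
    using assms unfolding fin_dim_subspace_def by blast
  have "set_prod FV FW = (\<lambda>(x, y). x * y) ` (FV \<times> FW)"
    by (auto simp: set_prod_def)
  then have "fin_dim (span (set_prod FV FW))"
    using F(1,3) by (simp add: fin_dim_span)
  moreover have "set_prod V W \<subseteq> span (set_prod FV FW)"
    using F(2,4) mult_mem_span_set_prod by (auto simp: set_prod_def)
  then have "span (set_prod V W) \<subseteq> span (set_prod FV FW)"
    by (rule span_minimal[OF _ subspace_span])
  ultimately show ?thesis
    by (rule fin_dim_subset[OF _ subspace_span])
qed

lemma subalgebra_contains_scalars: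
  assumes "is_subalgebra scale H"
  shows "range (\<lambda>c. c *\<^sub>k 1) \<subseteq> H"
  using assms unfolding is_subalgebra_def by (auto intro: subspace_scale)

lemma is_subalgebra_left_stabilizer:
  assumes "subspace W"
  shows "is_subalgebra scale (left_stabilizer W)"
  unfolding is_subalgebra_def left_stabilizer_def subspace_def
  using assms[unfolded subspace_def]
  by (auto simp: distrib_right scale_mult_left[symmetric] mult.assoc)

definition kneser_witness :: "'a set \<Rightarrow> 'a set \<Rightarrow> 'a set \<Rightarrow> 'a set \<Rightarrow> bool" where
  "kneser_witness V W S H \<longleftrightarrow>
     subspace S \<and> S \<subseteq> span (set_prod V W) \<and> S \<inter> units_of_ring \<noteq> {} \<and>
     is_subalgebra scale H \<and> fin_dim H \<and> set_prod H S = S \<and> dim V + dim W \<le> dim S + dim H"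

lemma kneser_witness_left_stabilizer:
  assumes "fin_dim V" "fin_dim W" "1 \<in> V" "1 \<in> W" "set_prod V W \<subseteq> W"
  shows "kneser_witness V W W (left_stabilizer W)"
proof -
  have W: "subspace W"
    using assms(2) unfolding fin_dim_subspace_def by blast
  have "W \<subseteq> span (set_prod V W)"
    using assms(3) by (force simp: set_prod_def intro: span_base)
  moreover have "1 \<in> W \<inter> units_of_ring"
    using assms(4) by (auto simp: units_of_ring_def)
  moreover have "fin_dim (left_stabilizer W)"
    using is_subalgebra_left_stabilizer[OF W] left_stabilizer_subset[OF assms(4)]
    by (intro fin_dim_subset[OF assms(2)]) (auto simp: is_subalgebra_def)
  moreover have "dim V \<le> dim (left_stabilizer W)"
    using assms(5) \<open>fin_dim (left_stabilizer W)\<close>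
    by (intro dim_le_if_subset_fin_dim) (auto simp: left_stabilizer_def set_prod_def)
  ultimately show ?thesis
    unfolding kneser_witness_def
    using W is_subalgebra_left_stabilizer[OF W] by (auto simp: set_prod_left_stabilizer)
qed

lemma kneser_witness_e_transform:
  assumes "fin_dim V" "fin_dim W" "e \<in> W" "\<forall>x\<in>V. \<forall>y\<in>V. x * y = y * x"
    and "kneser_witness (V \<inter> (\<lambda>v. v * e) -` W) (span (W \<union> (\<lambda>v. v * e) ` V)) S H"
  shows "kneser_witness V W S H"
proof -
  let ?V' = "V \<inter> (\<lambda>v. v * e) -` W" and ?W' = "span (W \<union> (\<lambda>v. v * e) ` V)"
  have "set_prod ?V' ?W' \<subseteq> span (set_prod V W)"
  proof
    fix z assume "z \<in> set_prod ?V' ?W'"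
    then obtain a b where ab: "z = a * b" "a \<in> ?V'" "b \<in> ?W'"
      by (auto simp: set_prod_def)
    \<comment> \<open>Commutativity of \<open>V\<close> enters here: \<open>a (x e) = x (a e)\<close> with \<open>a e \<in> W\<close>.\<close>
    have "a * x * e = x * (a * e)" if "x \<in> V" for x
      using assms(4) ab(2) that by (simp add: mult.assoc[symmetric])
    then have "set_prod {a} (W \<union> (\<lambda>v. v * e) ` V) \<subseteq> set_prod V W"
      using ab(2) by (auto simp: set_prod_def mult.assoc)
    then show "z \<in> span (set_prod V W)"
      using mult_mem_span_set_prod[OF span_base[of a "{a}"] ab(3)] span_mono ab(1) by blast
  qed
  then have "span (set_prod ?V' ?W') \<subseteq> span (set_prod V W)"
    by (intro span_minimal subspace_span)
  moreover have "dim V + dim W \<le> dim ?V' + dim ?W'"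
    by (rule dim_add_le_dim_Int_vimage_add_dim_span[OF linear_mult_right assms(1,2)])
  ultimately show ?thesis
    using assms(5) unfolding kneser_witness_def by auto
qed

lemma kneser_witness_exists_unital:
  assumes "fin_dim V" "fin_dim W" "1 \<in> V" "1 \<in> W" "\<forall>x\<in>V. \<forall>y\<in>V. x * y = y * x"
  shows "\<exists>S H. kneser_witness V W S H"
  using assms
proof (induction "dim V" arbitrary: V W rule: less_induct)
  case less
  show ?case
  proof (cases "set_prod V W \<subseteq> W")
    case True
    then show ?thesis
      using kneser_witness_left_stabilizer less.prems by blast
  next
    case False
    then obtain v e where ve: "v \<in> V" "e \<in> W" "v * e \<notin> W"
      by (auto simp: set_prod_def)
    define V' where "V' = V \<inter> (\<lambda>v. v * e) -` W"
    define W' where "W' = span (W \<union> (\<lambda>v. v * e) ` V)"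
    have W: "subspace W"
      using less.prems(2) unfolding fin_dim_subspace_def by blast
    have "fin_dim V'"
      unfolding V'_def by (rule fin_dim_Int_vimage[OF linear_mult_right less.prems(1) W])
    moreover have "dim V' < dim V"
      using fin_dim_subspace_def[of scale V'] \<open>fin_dim V'\<close> ve
      by (intro dim_less_if_psubset_fin_dim[OF less.prems(1)]) (auto simp: V'_def)
    moreover have "fin_dim W'"
      unfolding W'_def
      by (intro fin_dim_span_Un fin_dim_linear_image linear_mult_right less.prems(1,2))
    moreover have "1 \<in> V'" "1 \<in> W'"
      using less.prems(3,4) ve(2) by (auto simp: V'_def W'_def intro: span_base)
    moreover have "\<forall>x\<in>V'. \<forall>y\<in>V'. x * y = y * x"
      using less.prems(5) by (auto simp: V'_def)
    ultimately obtain S H where "kneser_witness V' W' S H"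
      using less.hyps by blast
    then have "kneser_witness V W S H"
      unfolding V'_def W'_def by (rule kneser_witness_e_transform[OF less.prems(1,2) ve(2) less.prems(5)])
    then show ?thesis
      by blast
  qed
qed

lemma kneser_witness_translate:
  assumes u: "u * u' = 1" "u' * u = 1" and w: "w * w' = 1" "w' * w = 1"
    and "kneser_witness ((\<lambda>s. u' * s) ` V) ((\<lambda>s. s * w') ` W) S H"
  shows "kneser_witness V W ((\<lambda>s. u * s * w) ` S) ((\<lambda>s. u * s * u') ` H)"
proof -
  interpret g: Vector_Spaces.linear scale scale "\<lambda>s. u * s * w"
    by (rule linear_mult)
  interpret k: Vector_Spaces.linear scale scale "\<lambda>s. u * s * u'"
    by (rule linear_mult)
  have S: "subspace S" "S \<subseteq> span (set_prod ((\<lambda>s. u' * s) ` V) ((\<lambda>s. s * w') ` W))"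
      "S \<inter> units_of_ring \<noteq> {}" "set_prod H S = S"
      "dim ((\<lambda>s. u' * s) ` V) + dim ((\<lambda>s. s * w') ` W) \<le> dim S + dim H"
    and H: "is_subalgebra scale H" "fin_dim H"
    using assms(5) unfolding kneser_witness_def by blast+
  have "set_prod ((\<lambda>s. u' * s) ` V) ((\<lambda>s. s * w') ` W) = (\<lambda>s. u' * s * w') ` set_prod V W"
    using set_prod_image_mult[of 1 1 u' V w' W] by simp
  then have "(\<lambda>s. u * s * w) ` S \<subseteq> span ((\<lambda>s. u * s * w) ` (\<lambda>s. u' * s * w') ` set_prod V W)"
    using image_mono[OF S(2)] by (simp add: g.span_image)
  then have span: "(\<lambda>s. u * s * w) ` S \<subseteq> span (set_prod V W)"
    by (simp add: image_mult_cancel[OF u(1) w(2)])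
  have "u \<in> units_of_ring" "w \<in> units_of_ring"
    using u w unfolding units_of_ring_def by blast+
  then have unit: "(\<lambda>s. u * s * w) ` S \<inter> units_of_ring \<noteq> {}"
    using S(3) units_of_ring_mult by blast
  have "is_subalgebra scale ((\<lambda>s. u * s * u') ` H)"
    unfolding is_subalgebra_def
  proof (intro conjI ballI)
    show "subspace ((\<lambda>s. u * s * u') ` H)"
      using H(1) unfolding is_subalgebra_def by (blast intro: k.subspace_image)
    show "1 \<in> (\<lambda>s. u * s * u') ` H"
      using H(1) u(1) unfolding is_subalgebra_def by force
    fix x y assume "x \<in> (\<lambda>s. u * s * u') ` H" "y \<in> (\<lambda>s. u * s * u') ` H"
    then obtain x' y' where xy: "x' \<in> H" "y' \<in> H" "x = u * x' * u'" "y = u * y' * u'"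
      by blast
    have "u' * (u * z) = z" for z
      using u(2) by (simp add: mult.assoc[symmetric])
    then have "x * y = u * (x' * y') * u'"
      using xy(3,4) by (simp add: mult.assoc)
    then show "x * y \<in> (\<lambda>s. u * s * u') ` H"
      using H(1) xy(1,2) unfolding is_subalgebra_def by blast
  qed
  moreover have "fin_dim ((\<lambda>s. u * s * u') ` H)"
    by (rule fin_dim_linear_image[OF linear_mult H(2)])
  moreover have "set_prod ((\<lambda>s. u * s * u') ` H) ((\<lambda>s. u * s * w) ` S) = (\<lambda>s. u * s * w) ` S"
    using set_prod_image_mult[OF u(2), of u H w S] S(4) by simp
  moreover have "dim V + dim W \<le> dim ((\<lambda>s. u * s * w) ` S) + dim ((\<lambda>s. u * s * u') ` H)"
    using S(5) dim_image_mult[OF u(2) w(1)] dim_image_mult[OF u(2) u(2)]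
      dim_image_mult[of u u' 1 1 V] dim_image_mult[of 1 1 w' w W] u(1) w(2)
    by simp
  ultimately show ?thesis
    unfolding kneser_witness_def using g.subspace_image[OF S(1)] span unit by blast
qed

end

theorem corollary4p9:
  fixes smult_k :: "'k::field \<Rightarrow> 'a::ring_1 \<Rightarrow> 'a"
    and V W :: "'a set"
  assumes "infinite (UNIV :: 'k set)"
    and "is_k_algebra smult_k"
    and "hyp_Hs smult_k"
    and "fin_dim_subspace smult_k V"
    and "fin_dim_subspace smult_k W"
    and "\<forall>x\<in>V. \<forall>y\<in>V. x * y = y * x"
    and "V \<inter> units_of_ring \<noteq> {}"
    and "W \<inter> units_of_ring \<noteq> {}"
  shows "\<exists>S H. module.subspace smult_k S \<and> S \<subseteq> module.span smult_k (set_prod V W) \<and>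
           is_subalgebra smult_k H \<and> fin_dim_subspace smult_k H \<and>
           S \<inter> units_of_ring \<noteq> {} \<and>
           range (\<lambda>c. smult_k c 1) \<subseteq> H \<and>
           vector_space.dim smult_k (module.span smult_k (set_prod V W)) \<ge> vector_space.dim smult_k S \<and>
           int (vector_space.dim smult_k S) \<ge>
             int (vector_space.dim smult_k V) + int (vector_space.dim smult_k W)
             - int (vector_space.dim smult_k H) \<and>
           set_prod H S = S"
proof -
  interpret k_algebra smult_k
    using assms(2) unfolding is_k_algebra_def k_algebra_def k_algebra_axioms_def by blast
  obtain v a where v: "v \<in> V" "v * a = 1" "a * v = 1"
    using assms(7) unfolding units_of_ring_def by blast
  obtain w b where w: "w \<in> W" "w * b = 1" "b * w = 1"
    using assms(8) unfolding units_of_ring_def by blast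
  have "fin_dim ((\<lambda>s. a * s) ` V)" "fin_dim ((\<lambda>s. s * b) ` W)"
    using assms(4,5) by (auto intro: fin_dim_linear_image linear_mult_left linear_mult_right)
  moreover have "1 \<in> (\<lambda>s. a * s) ` V" "1 \<in> (\<lambda>s. s * b) ` W"
    using v w by force+
  ultimately obtain S H where "kneser_witness ((\<lambda>s. a * s) ` V) ((\<lambda>s. s * b) ` W) S H"
    using kneser_witness_exists_unital commute_image_mult_inverse[OF v assms(6)] by blast
  then have witness: "kneser_witness V W ((\<lambda>s. v * s * w) ` S) ((\<lambda>s. v * s * a) ` H)"
    by (rule kneser_witness_translate[OF v(2,3) w(2,3)])
  show ?thesis
    using witness[unfolded kneser_witness_def] subalgebra_contains_scalars
      dim_le_if_subset_fin_dim[OF fin_dim_span_set_prod[OF assms(4,5)]]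
    by (intro exI[of _ "(\<lambda>s. v * s * w) ` S"] exI[of _ "(\<lambda>s. v * s * a) ` H"]) auto
qed

end
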